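(* Let $0<q<1$, $p=q^{1/2}$, $\alpha,\beta>-1$ real, and let $b_n=b_n^{(\alpha,\beta)}$ be the polynomials defined by the recurrence below. Then for every $n\ge0$ and $\mu\in\mathbb C$, $$b_n(\mu)=\sum_{j=0}^n\frac{(p^{-\beta-n-1},-p^{-\alpha-n-1};p)_j}{(p,p^{-2n-\alpha-\beta-2};p)_j}(-1)^jp^{j/2}\mu^{n-j}\;{}_4\phi_3\!\left(p^{-j},p^{2n+\alpha+\beta+3-j},p^{\beta+1},-p^{\alpha+1};\,p^{\alpha+\beta+2},p^{n+\beta+2-j},-p^{\alpha+n+2-j};\,p,p\right).$$
   Context: Notation: $(a;p)_0=1$, $(a;p)_n=\prod_{j=0}^{n-1}(1-ap^j)$, $(a_1,\dots,a_m;p)_n=\prod_k(a_k;p)_n$; ${}_4\phi_3(a_1,\dots,a_4;b_1,b_2,b_3;p,z)=\sum_{k\ge0}\frac{(a_1,a_2,a_3,a_4;p)_k}{(p,b_1,b_2,b_3;p)_k}z^k$. The polynomials $b_n=b_n^{(\alpha,\beta)}$ are defined by $b_{-1}(\mu)=0$, $b_0(\mu)=1$, and for $k\ge0$ $$b_{k+1}(\mu)=\Big[\mu+\frac{(1-p^{\beta-\alpha})(1+p^{\alpha+\beta+3+2k})}{(1-p^{\alpha+\beta+2+2k})(1-p^{\alpha+\beta+4+2k})}p^{\alpha+3/2+k}\Big]b_k(\mu)+\frac{(1-p^{2\alpha+2+2k})(1-p^{2\beta+2+2k})\,p^{2k+\alpha+\beta+2}}{(1-p^{\alpha+\beta+1+2k})(1-p^{\alpha+\beta+2+2k})^2(1-p^{\alpha+\beta+3+2k})}\,b_{k-1}(\mu).$$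 *)

theory Defs
  imports "HOL-Analysis.Analysis"
begin

definition qpoch :: "complex \<Rightarrow> complex \<Rightarrow> nat \<Rightarrow> complex" where
  "qpoch a p n = (\<Prod>j<n. 1 - a * p ^ j)"

definition phi43 :: "complex \<Rightarrow> complex \<Rightarrow> complex \<Rightarrow> complex \<Rightarrow> complex \<Rightarrow> complex \<Rightarrow> complex
                     \<Rightarrow> complex \<Rightarrow> complex \<Rightarrow> complex" where
  "phi43 a1 a2 a3 a4 b1 b2 b3 p z =
     (\<Sum>k. (qpoch a1 p k * qpoch a2 p k * qpoch a3 p k * qpoch a4 p k)
          / (qpoch p p k * qpoch b1 p k * qpoch b2 p k * qpoch b3 p k) * z ^ k)"

definition pw :: "real \<Rightarrow> real \<Rightarrow> complex" where
  "pw p x = complex_of_real (p powr x)"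

definition bc :: "real \<Rightarrow> real \<Rightarrow> real \<Rightarrow> nat \<Rightarrow> complex" where
  "bc p \<alpha> \<beta> k = ((1 - pw p (\<beta> - \<alpha>)) * (1 + pw p (\<alpha> + \<beta> + 3 + 2 * real k)))
      / ((1 - pw p (\<alpha> + \<beta> + 2 + 2 * real k)) * (1 - pw p (\<alpha> + \<beta> + 4 + 2 * real k)))
      * pw p (\<alpha> + 3/2 + real k)"

definition bd :: "real \<Rightarrow> real \<Rightarrow> real \<Rightarrow> nat \<Rightarrow> complex" where
  "bd p \<alpha> \<beta> k = ((1 - pw p (2 * \<alpha> + 2 + 2 * real k)) * (1 - pw p (2 * \<beta> + 2 + 2 * real k))
        * pw p (2 * real k + \<alpha> + \<beta> + 2))
      / ((1 - pw p (\<alpha> + \<beta> + 1 + 2 * real k)) * (1 - pw p (\<alpha> + \<beta> + 2 + 2 * real k)) ^ 2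
         * (1 - pw p (\<alpha> + \<beta> + 3 + 2 * real k)))"

text \<open>b_n^{(alpha,beta)}(mu) with b_{-1} = 0, b_0 = 1.\<close>
fun bpoly :: "real \<Rightarrow> real \<Rightarrow> real \<Rightarrow> nat \<Rightarrow> complex \<Rightarrow> complex" where
  "bpoly p \<alpha> \<beta> 0 \<mu> = 1"
| "bpoly p \<alpha> \<beta> (Suc 0) \<mu> = (\<mu> + bc p \<alpha> \<beta> 0) * 1 + bd p \<alpha> \<beta> 0 * 0"
| "bpoly p \<alpha> \<beta> (Suc (Suc k)) \<mu> =
     (\<mu> + bc p \<alpha> \<beta> (Suc k)) * bpoly p \<alpha> \<beta> (Suc k) \<mu> + bd p \<alpha> \<beta> (Suc k) * bpoly p \<alpha> \<beta> k \<mu>"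

end

theory Submission
  imports Defs
begin

text \<open>
  Reversing the terminating 4phi3 shows that the j-th
  summand is A_n(j) mu^(n-j), where A_n(j) = sum_(m+k=j) G_n(m) H(k) is the Cauchy product of a
  sequence G_n depending on n and a fixed sequence H. A rational-function identity shows that G_n
  satisfies the three-term recurrence of b_n in n, hence so does A_n(j) for j <= n + 1, and the
  q-Chu--Vandermonde sum gives A_n(n + 1) = 0. Therefore the right-hand side satisfies the
  recurrence and the initial values of b_n.
\<close>

section \<open>q-shifted factorials and the q-Chu--Vandermonde sum\<close>

lemma qpoch_0 [simp]: "qpoch x P 0 = 1"
  by (simp add: qpoch_def)

lemma qpoch_Suc: "qpoch x P (Suc k) = qpoch x P k * (1 - x * P ^ k)"
  by (simp add: qpoch_def lessThan_Suc mult.commute)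

lemma qpoch_Suc_shift: "qpoch x P (Suc k) = (1 - x) * qpoch (x * P) P k"
  unfolding qpoch_def by (subst prod.lessThan_Suc_shift) (simp add: mult.assoc power_commutes)

lemma qpoch_add: "qpoch x P (m + k) = qpoch x P m * qpoch (x * P ^ m) P k"
  by (induction k) (simp_all add: qpoch_Suc power_add mult_ac)

lemma qpoch_Suc_Suc: "qpoch x P (Suc (Suc r)) = qpoch x P r * (1 - x * P ^ r) * (1 - x * P ^ Suc r)"
  by (simp add: qpoch_Suc)

lemma qpoch_mult_Suc:
  "(1 - x) * qpoch (x * P) P (Suc r) = qpoch x P r * (1 - x * P ^ r) * (1 - x * P ^ Suc r)"
  by (simp only: qpoch_Suc_shift[symmetric] qpoch_Suc_Suc)

lemma qpoch_mult_square_Suc_Suc: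
  "(1 - x) * (1 - x * P) * qpoch (x * P\<^sup>2) P (Suc (Suc r)) = qpoch x P r
    * (1 - x * P ^ r) * (1 - x * P ^ Suc r) * (1 - x * P ^ Suc (Suc r)) * (1 - x * P ^ Suc (Suc (Suc r)))"
  using qpoch_add[of x P 2 "Suc (Suc r)", symmetric] by (simp add: qpoch_Suc eval_nat_numeral mult_ac)

lemma qpoch_divide_Suc_Suc:
  assumes "P \<noteq> 0"
  shows "qpoch (x / P) P (Suc (Suc r)) = (1 - x / P) * qpoch x P r * (1 - x * P ^ r)"
proof -
  have "qpoch (x / P) P (Suc (Suc r)) = (1 - x / P) * qpoch (x / P * P) P (Suc r)"
    by (rule qpoch_Suc_shift)
  also have "x / P * P = x"
    using assms by simp
  finally show ?thesis
    by (simp only: qpoch_Suc[of x P r] mult.assoc)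
qed

lemma qpoch_eq_0_iff: "qpoch x P k = 0 \<longleftrightarrow> (\<exists>i<k. x * P ^ i = 1)"
  by (auto simp: qpoch_def)

lemma qpoch_inverse:
  assumes "y \<noteq> 0" "P \<noteq> 0"
  shows "qpoch (inverse y) P m = (-1) ^ m * inverse y ^ m * P ^ (\<Sum>i<m. i) * qpoch (y * P / P ^ m) P m"
proof (induction m)
  case (Suc m)
  have "1 - inverse y * P ^ m = - (inverse y * P ^ m) * (1 - y / P ^ m)"
    using assms by (simp add: field_simps)
  moreover have "qpoch (y * P / P ^ Suc m) P (Suc m) = (1 - y / P ^ m) * qpoch (y * P / P ^ m) P m"
    using assms by (simp add: qpoch_Suc_shift field_simps)
  ultimately show ?case
    using Suc.IH by (simp add: qpoch_Suc power_add mult_ac)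
qed simp

definition qcv_term :: "complex \<Rightarrow> complex \<Rightarrow> complex \<Rightarrow> nat \<Rightarrow> nat \<Rightarrow> complex" where
  "qcv_term q b c N k = qpoch (inverse q ^ N) q k * qpoch b q k / (qpoch q q k * qpoch c q k) * q ^ k"

lemma qcv_term_0 [simp]: "qcv_term q b c N 0 = 1"
  by (simp add: qcv_term_def)

lemma qcv_term_beyond:
  assumes "q \<noteq> 0" "N < k"
  shows "qcv_term q b c N k = 0"
  using assms by (auto simp: qcv_term_def qpoch_eq_0_iff power_mult_distrib[symmetric])

lemma qcv_term_Suc:
  "qcv_term q b c N (Suc k)
    = qcv_term q b c N k
      * ((1 - inverse q ^ N * q ^ k) * (1 - b * q ^ k) * q / ((1 - q * q ^ k) * (1 - c * q ^ k)))"
  unfolding qcv_term_def qpoch_Suc by (simp add: divide_inverse inverse_mult_distrib mult_ac)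

lemma qcv_term_Suc_Suc:
  assumes "q \<noteq> 0" "q * q ^ k \<noteq> 1"
  shows "qcv_term q b c (Suc N) (Suc k)
    = qcv_term q b c N (Suc k) - inverse q ^ N * (1 - b) / (1 - c) * qcv_term q (b * q) (c * q) N k"
proof -
  define t where "t = inverse q"
  have tq: "t * q = 1" using assms by (simp add: t_def)
  define R where "R = qpoch (t ^ N) q k * (1 - b) * qpoch (b * q) q k * q ^ k
    / (qpoch q q k * (1 - c) * qpoch (c * q) q k)"
  have "t ^ Suc N * q = t ^ N" using tq by (simp add: mult_ac)
  then have "qpoch (t ^ Suc N) q (Suc k) = (1 - t ^ Suc N) * qpoch (t ^ N) q k"
    by (simp only: qpoch_Suc_shift)
  then have L: "qcv_term q b c (Suc N) (Suc k) = R * ((1 - t ^ Suc N) * q / (1 - q * q ^ k))"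
    unfolding qcv_term_def t_def[symmetric] R_def
    by (simp add: qpoch_Suc_shift[of b] qpoch_Suc_shift[of c]
        qpoch_Suc[of q] divide_inverse inverse_mult_distrib mult_ac)
  have M: "qcv_term q b c N (Suc k) = R * ((1 - t ^ N * q ^ k) * q / (1 - q * q ^ k))"
    unfolding qcv_term_def t_def[symmetric] R_def
    by (simp add: qpoch_Suc[of "t ^ N"] qpoch_Suc_shift[of b] qpoch_Suc_shift[of c]
        qpoch_Suc[of q] divide_inverse inverse_mult_distrib mult_ac)
  have T: "t ^ N * (1 - b) / (1 - c) * qcv_term q (b * q) (c * q) N k = R * t ^ N"
    unfolding qcv_term_def t_def[symmetric] R_def by (simp add: divide_inverse inverse_mult_distrib mult_ac)
  have "(1 - t ^ Suc N) * q = (1 - t ^ N * q ^ k) * q - t ^ N * (1 - q * q ^ k)"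
    using tq by (simp add: algebra_simps)
  then have "(1 - t ^ Suc N) * q / (1 - q * q ^ k) = (1 - t ^ N * q ^ k) * q / (1 - q * q ^ k) - t ^ N"
    using assms(2) by (simp add: field_simps)
  then have "qcv_term q b c (Suc N) (Suc k)
      = qcv_term q b c N (Suc k) - t ^ N * (1 - b) / (1 - c) * qcv_term q (b * q) (c * q) N k"
    unfolding L M T by (simp only: right_diff_distrib)
  then show ?thesis by (simp only: t_def)
qed

lemma qcv_sum_Suc:
  assumes "q \<noteq> 0" "\<And>k. 1 \<le> k \<Longrightarrow> k \<le> Suc N \<Longrightarrow> q ^ k \<noteq> 1"
  shows "(\<Sum>k\<le>Suc N. qcv_term q b c (Suc N) k)
    = (\<Sum>k\<le>N. qcv_term q b c N k)
      - inverse q ^ N * (1 - b) / (1 - c) * (\<Sum>k\<le>N. qcv_term q (b * q) (c * q) N k)"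
proof -
  have step: "qcv_term q b c (Suc N) (Suc k)
      = qcv_term q b c N (Suc k) - inverse q ^ N * (1 - b) / (1 - c) * qcv_term q (b * q) (c * q) N k"
    if "k \<le> N" for k
    using assms(2)[of "Suc k"] that by (intro qcv_term_Suc_Suc[OF assms(1)]) auto
  have "(\<Sum>k\<le>Suc N. qcv_term q b c (Suc N) k) = 1 + (\<Sum>k\<le>N. qcv_term q b c (Suc N) (Suc k))"
    by (simp only: sum.atMost_Suc_shift qcv_term_0)
  also have "\<dots> = 1 + (\<Sum>k\<le>N. qcv_term q b c N (Suc k))
      - inverse q ^ N * (1 - b) / (1 - c) * (\<Sum>k\<le>N. qcv_term q (b * q) (c * q) N k)"
    by (simp add: step sum_subtractf sum_distrib_left)
  also have "1 + (\<Sum>k\<le>N. qcv_term q b c N (Suc k)) = (\<Sum>k\<le>Suc N. qcv_term q b c N k)"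
    by (simp only: sum.atMost_Suc_shift qcv_term_0)
  also have "\<dots> = (\<Sum>k\<le>N. qcv_term q b c N k)"
    using assms(1) by (simp add: qcv_term_beyond)
  finally show ?thesis .
qed

text \<open>The product on the right is b^N (c/b; q)_N.\<close>
theorem q_chu_vandermonde:
  assumes "q \<noteq> 0" "\<And>k. 1 \<le> k \<Longrightarrow> k \<le> N \<Longrightarrow> q ^ k \<noteq> 1" "\<And>i. i < N \<Longrightarrow> c * q ^ i \<noteq> 1"
  shows "(\<Sum>k\<le>N. qcv_term q b c N k) = (\<Prod>i<N. b - c * q ^ i) / qpoch c q N"
  using assms(2,3)
proof (induction N arbitrary: b c)
  case (Suc N)
  define Pr where "Pr = (\<Prod>i<N. b - c * q ^ i)"
  have IH: "(\<Sum>k\<le>N. qcv_term q b c N k) = Pr / qpoch c q N"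
    using Suc by (simp add: Pr_def)
  have "(\<Prod>i<N. b * q - c * q * q ^ i) = (\<Prod>i<N. q * (b - c * q ^ i))"
    by (simp add: algebra_simps)
  then have IH': "(\<Sum>k\<le>N. qcv_term q (b * q) (c * q) N k) = q ^ N * Pr / qpoch (c * q) q N"
    using Suc.prems(1) Suc.prems(2)[of "Suc i" for i] Suc.IH[of "c * q" "b * q"]
    by (simp add: prod.distrib Pr_def mult.assoc)
  have c1: "1 - c \<noteq> 0" and cN: "1 - c * q ^ N \<noteq> 0" and QN: "qpoch c q N \<noteq> 0"
    using Suc.prems(2) by (fastforce simp: qpoch_eq_0_iff)+
  have shift: "qpoch (c * q) q N = qpoch c q N * (1 - c * q ^ N) / (1 - c)"
    using qpoch_Suc[of c q N] qpoch_Suc_shift[of c q N] c1 by (simp add: field_simps)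
  have "inverse q ^ N * q ^ N = 1"
    using assms(1) by (simp add: power_mult_distrib[symmetric])
  moreover have "inverse q ^ N * (1 - b) / (1 - c) * (q ^ N * Pr / qpoch (c * q) q N)
      = (inverse q ^ N * q ^ N) * ((1 - b) * Pr / (qpoch c q N * (1 - c * q ^ N))) * ((1 - c) / (1 - c))"
    by (simp add: shift divide_inverse inverse_mult_distrib mult_ac)
  ultimately have "inverse q ^ N * (1 - b) / (1 - c) * (q ^ N * Pr / qpoch (c * q) q N)
      = (1 - b) * Pr / (qpoch c q N * (1 - c * q ^ N))"
    using c1 by simp
  then have "(\<Sum>k\<le>Suc N. qcv_term q b c (Suc N) k)
      = Pr / qpoch c q N - (1 - b) * Pr / (qpoch c q N * (1 - c * q ^ N))"
    by (simp only: qcv_sum_Suc[OF assms(1) Suc.prems(1)] IH IH')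
  also have "\<dots> = Pr * (b - c * q ^ N) / (qpoch c q N * (1 - c * q ^ N))"
    using cN QN by (simp add: field_simps)
  finally show ?case by (simp add: qpoch_Suc Pr_def)
qed simp

section \<open>The coefficients of b_n\<close>

lemma sum_atMost_Suc_Suc_shift:
  "(\<Sum>j\<le>Suc (Suc n). f j) = f 0 + f 1 + (\<Sum>k\<le>n. f (Suc (Suc k)))"
  by (simp only: sum.atMost_Suc_shift One_nat_def add.assoc)

text \<open>
  The three-term recurrence of G_n (lemma gcoeff_recurrence) divided by G_n(r), in the variables
  X = P^n and Y = P^r.
\<close>
lemma gcoeff_step_identity:
  fixes a b s X Y P :: complex
  defines "k3 \<equiv> 1 - a * b * X\<^sup>2 * P ^ 3" and "k4 \<equiv> 1 - a * b * X\<^sup>2 * P ^ 4"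
    and "k5 \<equiv> 1 - a * b * X\<^sup>2 * P ^ 5" and "k6 \<equiv> 1 - a * b * X\<^sup>2 * P ^ 6"
  assumes P: "P = s\<^sup>2" and a: "a \<noteq> 0" and Y: "1 - Y * P \<noteq> 0" "1 - Y * P\<^sup>2 \<noteq> 0"
    and k: "k3 \<noteq> 0" "k4 \<noteq> 0" "k5 \<noteq> 0" "k6 \<noteq> 0"
  shows "P\<^sup>2 * (1 - b * X * P\<^sup>2) * (1 - b * X * P ^ 3) * (1 + a * X * P\<^sup>2) * (1 + a * X * P ^ 3)
        * (Y - a * b * X\<^sup>2 * P ^ 3) * (Y - a * b * X\<^sup>2 * P ^ 4)
        / ((1 - Y * P) * (1 - Y * P\<^sup>2) * k3 * k4 * k5 * k6)
    = P\<^sup>2 * (Y - b * X * P) * (Y + a * X * P) * (1 - b * X * P\<^sup>2) * (1 + a * X * P\<^sup>2)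
        / ((1 - Y * P) * (1 - Y * P\<^sup>2) * k3 * k4)
      + (1 - b / a) * (1 + a * b * X\<^sup>2 * P ^ 5) / (k4 * k6) * a * s ^ 3 * (X * P)
        * (- s * (1 - b * X * P\<^sup>2) * (1 + a * X * P\<^sup>2) * (Y - a * b * X\<^sup>2 * P ^ 3) / ((1 - Y * P) * k3 * k4))
      + (1 - a\<^sup>2 * X\<^sup>2 * P ^ 4) * (1 - b\<^sup>2 * X\<^sup>2 * P ^ 4) * a * b * X\<^sup>2 * P ^ 4 / (k3 * k4\<^sup>2 * k5)"
    (is "?R3 = ?R2 + ?c * ?R1 + ?d")
proof -
  define N where "N = P\<^sup>2 / ((1 - Y * P) * (1 - Y * P\<^sup>2) * k3 * k4\<^sup>2 * k5 * k6)"
  define B A where "B = (1 - b * X * P\<^sup>2) * (1 + a * X * P\<^sup>2)" and "A = Y - a * b * X\<^sup>2 * P ^ 3"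
  have "?R3 = N * (B * (1 - b * X * P ^ 3) * (1 + a * X * P ^ 3) * A * (Y - a * b * X\<^sup>2 * P ^ 4) * k4)"
    unfolding N_def A_def B_def using Y k by (simp add: frac_eq_eq power2_eq_square mult_ac)
  moreover have "?R2 = N * ((Y - b * X * P) * (Y + a * X * P) * B * k4 * k5 * k6)"
    unfolding N_def B_def using Y k by (simp add: frac_eq_eq power2_eq_square mult_ac)
  moreover have "?c * ?R1 = N * ((b - a) * (1 + a * b * X\<^sup>2 * P ^ 5) * X * P * A * B * (1 - Y * P\<^sup>2) * k5)"
  proof -
    have ab: "- ((1 - b / a) * a) = b - a" and s4: "s ^ 3 * s = P\<^sup>2"
      using a P by (simp_all add: field_simps power2_eq_square power3_eq_cube)
    have "?c * ?R1 = (- ((1 - b / a) * a)) * (s ^ 3 * s) * (X * P) * (1 + a * b * X\<^sup>2 * P ^ 5) * (B * A)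
        / (k4 * k6 * ((1 - Y * P) * k3 * k4))"
      unfolding A_def B_def by (simp add: mult_ac)
    also have "\<dots> = (b - a) * P\<^sup>2 * (X * P) * (1 + a * b * X\<^sup>2 * P ^ 5) * (B * A)
        / (k4 * k6 * ((1 - Y * P) * k3 * k4))"
      unfolding ab s4 ..
    also have "\<dots> = N * ((b - a) * (1 + a * b * X\<^sup>2 * P ^ 5) * X * P * A * B * (1 - Y * P\<^sup>2) * k5)"
      unfolding N_def using Y k by (simp add: frac_eq_eq power2_eq_square mult_ac)
    finally show ?thesis .
  qed
  moreover have "?d = N * ((1 - a\<^sup>2 * X\<^sup>2 * P ^ 4) * (1 - b\<^sup>2 * X\<^sup>2 * P ^ 4) * a * b * X\<^sup>2 * P\<^sup>2
      * (1 - Y * P) * (1 - Y * P\<^sup>2) * k6)"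
    unfolding N_def using Y k by (simp add: frac_eq_eq power2_eq_square power4_eq_xxxx mult_ac)
  moreover have "B * (1 - b * X * P ^ 3) * (1 + a * X * P ^ 3) * A * (Y - a * b * X\<^sup>2 * P ^ 4) * k4
    = (Y - b * X * P) * (Y + a * X * P) * B * k4 * k5 * k6
      + (b - a) * (1 + a * b * X\<^sup>2 * P ^ 5) * X * P * A * B * (1 - Y * P\<^sup>2) * k5
      + (1 - a\<^sup>2 * X\<^sup>2 * P ^ 4) * (1 - b\<^sup>2 * X\<^sup>2 * P ^ 4) * a * b * X\<^sup>2 * P\<^sup>2 * (1 - Y * P) * (1 - Y * P\<^sup>2) * k6"
    unfolding A_def B_def k3_def k4_def k5_def k6_def by algebra
  ultimately show ?thesis
    by (simp add: distrib_left)
qed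

text \<open>
  The parameters are a = p^alpha, b = p^beta, s = p^(1/2) and P = p. The assumptions are the
  non-degeneracy conditions guaranteed by 0 < p < 1 and alpha, beta > -1.
\<close>
locale bpoly_parameters =
  fixes a b s P :: complex
  assumes P_eq: "P = s\<^sup>2" and s_nonzero: "s \<noteq> 0" and a_nonzero: "a \<noteq> 0" and b_nonzero: "b \<noteq> 0"
    and P_power_ne_1: "\<And>e. 1 \<le> e \<Longrightarrow> P ^ e \<noteq> 1"
    and abP_power_ne_1: "\<And>e. 2 \<le> e \<Longrightarrow> a * b * P ^ e \<noteq> 1"
    and bP_power_ne_1: "\<And>e. 1 \<le> e \<Longrightarrow> b * P ^ e \<noteq> 1"
    and aP_power_ne_minus_1: "\<And>e. a * P ^ e \<noteq> -1"
begin

lemma P_nonzero: "P \<noteq> 0"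
  using P_eq s_nonzero by simp

lemma mult_power_divide_power: "r \<le> e \<Longrightarrow> x * P ^ e / P ^ r = x * P ^ (e - r)"
  using P_nonzero by (simp add: power_diff)

lemma s_power_square_add: "s ^ ((r + k) * (r + k)) = s ^ (r * r) * P ^ (r * k) * s ^ (k * k)"
proof -
  have "(r + k) * (r + k) = r * r + 2 * (r * k) + k * k"
    by (simp add: algebra_simps)
  then show ?thesis
    by (simp add: P_eq power_add power_mult)
qed

lemma s_power_square_Suc_Suc: "s ^ (Suc (Suc r) * Suc (Suc r)) = s ^ (r * r) * (P ^ r * P ^ r * P\<^sup>2)"
  using s_power_square_add[of r 2] by (simp add: P_eq power_mult power_add mult_ac eval_nat_numeral)

lemma s_power_square: "s ^ (m * m) = P ^ (\<Sum>i<m. i) * s ^ m"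
proof (induction m)
  case (Suc m)
  have "Suc m * Suc m = m * m + 2 * m + 1"
    by simp
  moreover have "s ^ m * s ^ m = P ^ m"
    by (simp add: P_eq power2_eq_square power_mult_distrib)
  ultimately show ?case
    using Suc by (simp add: power_add mult_ac)
qed simp

lemma abP_power_divide_ne_1:
  assumes "2 \<le> k" "r \<le> n"
  shows "1 - a * b * P ^ (2 * n + k) / P ^ r \<noteq> 0"
  using abP_power_ne_1[of "2 * n + k - r"] assms by (simp add: mult_power_divide_power)

lemma abP_power_square_ne_1: "2 \<le> k \<Longrightarrow> 1 - a * b * (P ^ n)\<^sup>2 * P ^ k \<noteq> 0"
  using abP_power_ne_1[of "2 * n + k"] by (simp add: power_add power_mult[symmetric] mult_ac)

lemma P_power_mult_ne_1: "1 \<le> k \<Longrightarrow> 1 - P ^ r * P ^ k \<noteq> 0"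
  using P_power_ne_1[of "r + k"] by (simp add: power_add)

text \<open>
  G_n(m) of the proof idea. The quotient P^(n+2) / P^m stands for P^(n+2-m) and avoids truncated
  subtraction.
\<close>
definition gcoeff :: "nat \<Rightarrow> nat \<Rightarrow> complex" where
  "gcoeff n m = (-1) ^ m * s ^ (m * m)
     * qpoch (b * P ^ (n + 2) / P ^ m) P m * qpoch (- (a * P ^ (n + 2) / P ^ m)) P m
     / (qpoch P P m * qpoch (a * b * P ^ (2 * n + 3) / P ^ m) P m)"

definition rec_c :: "nat \<Rightarrow> complex" where
  "rec_c n = (1 - b / a) * (1 + a * b * P ^ (2 * n + 3))
     / ((1 - a * b * P ^ (2 * n + 2)) * (1 - a * b * P ^ (2 * n + 4))) * a * s ^ 3 * P ^ n"

definition rec_d :: "nat \<Rightarrow> complex" where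
  "rec_d n = (1 - a\<^sup>2 * P ^ (2 * n + 2)) * (1 - b\<^sup>2 * P ^ (2 * n + 2)) * a * b * P ^ (2 * n + 2)
     / ((1 - a * b * P ^ (2 * n + 1)) * (1 - a * b * P ^ (2 * n + 2))\<^sup>2 * (1 - a * b * P ^ (2 * n + 3)))"

lemma gcoeff_0 [simp]: "gcoeff n 0 = 1"
  by (simp add: gcoeff_def)

lemma gcoeff_1:
  "gcoeff n 1 = - (s * (1 - b * P ^ n * P) * (1 + a * P ^ n * P) / ((1 - P) * (1 - a * b * (P ^ n)\<^sup>2 * P\<^sup>2)))"
proof -
  have args: "b * P ^ (n + 2) / P ^ 1 = b * P ^ n * P" "a * P ^ (n + 2) / P ^ 1 = a * P ^ n * P"
      "a * b * P ^ (2 * n + 3) / P ^ 1 = a * b * (P ^ n)\<^sup>2 * P\<^sup>2"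
    using P_nonzero by (simp_all add: power_add power_mult[symmetric] mult_ac eval_nat_numeral)
  have "qpoch x P 1 = 1 - x" for x
    by (simp add: qpoch_def)
  then show ?thesis
    unfolding gcoeff_def args by simp
qed

lemma gcoeff_Suc:
  "gcoeff n (Suc m) = gcoeff n m
    * (- (s ^ (2 * m + 1)) * (1 - b * P ^ (n + 2) / P ^ Suc m) * (1 + a * P ^ (n + 2) / P ^ Suc m)
       / ((1 - P ^ Suc m) * (1 - a * b * P ^ (2 * n + 3) / P ^ Suc m)))"
proof -
  have shift: "y / P ^ Suc m * P = y / P ^ m" for y
    using P_nonzero by (simp add: field_simps)
  have q: "qpoch (y / P ^ Suc m) P (Suc m) = (1 - y / P ^ Suc m) * qpoch (y / P ^ m) P m"
    "qpoch (- (y / P ^ Suc m)) P (Suc m) = (1 + y / P ^ Suc m) * qpoch (- (y / P ^ m)) P m" for y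
    unfolding qpoch_Suc_shift using shift by simp_all
  have square: "Suc m * Suc m = m * m + (2 * m + 1)"
    by simp
  show ?thesis
    unfolding gcoeff_def q qpoch_Suc[of P P m] square power_add
    by (simp add: divide_inverse inverse_mult_distrib mult_ac)
qed

lemma gcoeff_Suc_Suc:
  assumes "r \<le> n"
  shows "gcoeff (Suc n) (Suc r) = gcoeff n r
    * (- s * (1 - b * P ^ n * P\<^sup>2) * (1 + a * P ^ n * P\<^sup>2) * (P ^ r - a * b * (P ^ n)\<^sup>2 * P ^ 3)
       / ((1 - P ^ r * P) * (1 - a * b * (P ^ n)\<^sup>2 * P ^ 3) * (1 - a * b * (P ^ n)\<^sup>2 * P ^ 4)))"
proof -
  define y where "y = a * b * P ^ (2 * n + 3) / P ^ r"
  have y1: "1 - y \<noteq> 0"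
    using abP_power_divide_ne_1[OF _ assms] by (simp add: y_def)
  have yP: "y * P ^ r = a * b * (P ^ n)\<^sup>2 * P ^ 3" "y * P ^ Suc r = a * b * (P ^ n)\<^sup>2 * P ^ 4"
    using P_nonzero by (simp_all add: y_def power_add power_mult[symmetric] mult_ac eval_nat_numeral)
  have "(1 - y) * qpoch (y * P) P (Suc r)
      = qpoch y P r * (1 - a * b * (P ^ n)\<^sup>2 * P ^ 3) * (1 - a * b * (P ^ n)\<^sup>2 * P ^ 4)"
    using qpoch_mult_Suc[of y P r] unfolding yP .
  then have qy: "qpoch (y * P) P (Suc r)
      = qpoch y P r * (1 - a * b * (P ^ n)\<^sup>2 * P ^ 3) * (1 - a * b * (P ^ n)\<^sup>2 * P ^ 4) / (1 - y)"
    using y1 by (simp add: eq_divide_eq mult.commute)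
  have args: "b * P ^ (Suc n + 2) / P ^ Suc r = b * P ^ (n + 2) / P ^ r"
      "a * P ^ (Suc n + 2) / P ^ Suc r = a * P ^ (n + 2) / P ^ r"
      "a * b * P ^ (2 * Suc n + 3) / P ^ Suc r = y * P"
    using P_nonzero by (simp_all add: y_def field_simps power_add eval_nat_numeral)
  have ends: "b * P ^ (n + 2) / P ^ r * P ^ r = b * P ^ n * P\<^sup>2"
      "- (a * P ^ (n + 2) / P ^ r) * P ^ r = - (a * P ^ n * P\<^sup>2)"
    using P_nonzero by (simp_all add: power_add power2_eq_square)
  have sign: "(-1) ^ Suc r * s ^ (Suc r * Suc r) = (-1) ^ r * s ^ (r * r) * (- (s * P ^ r))"
    using s_power_square_add[of r 1] by simp
  have "gcoeff (Suc n) (Suc r) = gcoeff n r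
      * (- (s * P ^ r) * (1 - y) * (1 - b * P ^ n * P\<^sup>2) * (1 + a * P ^ n * P\<^sup>2)
      / ((1 - P ^ r * P) * (1 - a * b * (P ^ n)\<^sup>2 * P ^ 3) * (1 - a * b * (P ^ n)\<^sup>2 * P ^ 4)))"
    unfolding gcoeff_def args y_def[symmetric] unfolding qy unfolding qpoch_Suc ends sign
    by (simp add: divide_inverse inverse_mult_distrib mult_ac)
  moreover have "P ^ r * (1 - y) = P ^ r - a * b * (P ^ n)\<^sup>2 * P ^ 3"
    using yP by (simp add: algebra_simps)
  ultimately show ?thesis
    by (simp add: mult_ac)
qed

lemma gcoeff_Suc_Suc_Suc:
  assumes "r \<le> n"
  shows "gcoeff (Suc n) (Suc (Suc r)) = gcoeff n r
    * (P\<^sup>2 * (P ^ r - b * P ^ n * P) * (P ^ r + a * P ^ n * P) * (1 - b * P ^ n * P\<^sup>2) * (1 + a * P ^ n * P\<^sup>2)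
       / ((1 - P ^ r * P) * (1 - P ^ r * P\<^sup>2) * (1 - a * b * (P ^ n)\<^sup>2 * P ^ 3) * (1 - a * b * (P ^ n)\<^sup>2 * P ^ 4)))"
proof -
  define y where "y = a * b * P ^ (2 * n + 3) / P ^ r"
  define \<beta> where "\<beta> = b * P ^ (n + 2) / P ^ r"
  define \<alpha> where "\<alpha> = - (a * P ^ (n + 2) / P ^ r)"
  have args: "b * P ^ (Suc n + 2) / P ^ Suc (Suc r) = \<beta> / P"
      "- (a * P ^ (Suc n + 2) / P ^ Suc (Suc r)) = \<alpha> / P"
      "a * b * P ^ (2 * Suc n + 3) / P ^ Suc (Suc r) = y"
    using P_nonzero by (simp_all add: y_def \<alpha>_def \<beta>_def field_simps power_add eval_nat_numeral)
  have ends: "\<beta> * P ^ r = b * P ^ n * P\<^sup>2" "\<alpha> * P ^ r = - (a * P ^ n * P\<^sup>2)"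
      "y * P ^ r = a * b * (P ^ n)\<^sup>2 * P ^ 3" "y * P ^ Suc r = a * b * (P ^ n)\<^sup>2 * P ^ 4"
    using P_nonzero
    by (simp_all add: y_def \<alpha>_def \<beta>_def power_add power_mult[symmetric] mult_ac eval_nat_numeral)
  have starts: "P ^ r * (1 - \<beta> / P) = P ^ r - b * P ^ n * P"
      "P ^ r * (1 - \<alpha> / P) = P ^ r + a * P ^ n * P"
    using P_nonzero by (simp_all add: \<alpha>_def \<beta>_def field_simps power2_eq_square)
  have "gcoeff (Suc n) (Suc (Suc r)) = gcoeff n r
      * (P\<^sup>2 * (P ^ r * (1 - \<beta> / P)) * (P ^ r * (1 - \<alpha> / P)) * (1 - b * P ^ n * P\<^sup>2) * (1 + a * P ^ n * P\<^sup>2)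
         / ((1 - P ^ r * P) * (1 - P ^ r * P\<^sup>2) * (1 - a * b * (P ^ n)\<^sup>2 * P ^ 3) * (1 - a * b * (P ^ n)\<^sup>2 * P ^ 4)))"
    unfolding gcoeff_def args \<beta>_def[symmetric] \<alpha>_def[symmetric] y_def[symmetric] s_power_square_Suc_Suc
    unfolding qpoch_divide_Suc_Suc[OF P_nonzero] unfolding qpoch_Suc ends
    by (simp add: divide_inverse inverse_mult_distrib mult_ac power2_eq_square)
  then show ?thesis
    unfolding starts .
qed

lemma gcoeff_Suc_Suc_Suc_Suc:
  assumes "r \<le> n"
  shows "gcoeff (Suc (Suc n)) (Suc (Suc r)) = gcoeff n r
    * (P\<^sup>2 * (1 - b * P ^ n * P\<^sup>2) * (1 - b * P ^ n * P ^ 3) * (1 + a * P ^ n * P\<^sup>2) * (1 + a * P ^ n * P ^ 3)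
         * (P ^ r - a * b * (P ^ n)\<^sup>2 * P ^ 3) * (P ^ r - a * b * (P ^ n)\<^sup>2 * P ^ 4)
       / ((1 - P ^ r * P) * (1 - P ^ r * P\<^sup>2) * (1 - a * b * (P ^ n)\<^sup>2 * P ^ 3) * (1 - a * b * (P ^ n)\<^sup>2 * P ^ 4)
          * (1 - a * b * (P ^ n)\<^sup>2 * P ^ 5) * (1 - a * b * (P ^ n)\<^sup>2 * P ^ 6)))"
proof -
  define y where "y = a * b * P ^ (2 * n + 3) / P ^ r"
  define \<beta> where "\<beta> = b * P ^ (n + 2) / P ^ r"
  define \<alpha> where "\<alpha> = - (a * P ^ (n + 2) / P ^ r)"
  have y1: "1 - y \<noteq> 0" and yP1: "1 - y * P \<noteq> 0"
    using abP_power_divide_ne_1[OF _ assms, of 3] abP_power_divide_ne_1[OF _ assms, of 4] P_nonzero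
    by (simp_all add: y_def power_add field_simps eval_nat_numeral)
  have args: "b * P ^ (Suc (Suc n) + 2) / P ^ Suc (Suc r) = \<beta>"
      "- (a * P ^ (Suc (Suc n) + 2) / P ^ Suc (Suc r)) = \<alpha>"
      "a * b * P ^ (2 * Suc (Suc n) + 3) / P ^ Suc (Suc r) = y * P\<^sup>2"
    using P_nonzero by (simp_all add: y_def \<alpha>_def \<beta>_def field_simps power_add eval_nat_numeral)
  have ends: "\<beta> * P ^ r = b * P ^ n * P\<^sup>2" "\<beta> * P ^ Suc r = b * P ^ n * P ^ 3"
      "\<alpha> * P ^ r = - (a * P ^ n * P\<^sup>2)" "\<alpha> * P ^ Suc r = - (a * P ^ n * P ^ 3)"
      "y * P ^ r = a * b * (P ^ n)\<^sup>2 * P ^ 3" "y * P ^ Suc r = a * b * (P ^ n)\<^sup>2 * P ^ 4"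
      "y * P ^ Suc (Suc r) = a * b * (P ^ n)\<^sup>2 * P ^ 5" "y * P ^ Suc (Suc (Suc r)) = a * b * (P ^ n)\<^sup>2 * P ^ 6"
    using P_nonzero
    by (simp_all add: y_def \<alpha>_def \<beta>_def power_add power_mult[symmetric] mult_ac eval_nat_numeral)
  have qy: "qpoch (y * P\<^sup>2) P (Suc (Suc r)) = qpoch y P r
      * (1 - a * b * (P ^ n)\<^sup>2 * P ^ 3) * (1 - a * b * (P ^ n)\<^sup>2 * P ^ 4)
      * (1 - a * b * (P ^ n)\<^sup>2 * P ^ 5) * (1 - a * b * (P ^ n)\<^sup>2 * P ^ 6) / ((1 - y) * (1 - y * P))"
    using qpoch_mult_square_Suc_Suc[of y P r] y1 yP1 unfolding ends by (simp add: eq_divide_eq mult_ac)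
  have starts: "P ^ r * (1 - y) = P ^ r - a * b * (P ^ n)\<^sup>2 * P ^ 3"
      "P ^ r * (1 - y * P) = P ^ r - a * b * (P ^ n)\<^sup>2 * P ^ 4"
    using ends(5,6) by (simp_all add: algebra_simps eval_nat_numeral)
  have "gcoeff (Suc (Suc n)) (Suc (Suc r)) = gcoeff n r
    * (P\<^sup>2 * (1 - b * P ^ n * P\<^sup>2) * (1 - b * P ^ n * P ^ 3) * (1 + a * P ^ n * P\<^sup>2) * (1 + a * P ^ n * P ^ 3)
         * (P ^ r * (1 - y)) * (P ^ r * (1 - y * P))
       / ((1 - P ^ r * P) * (1 - P ^ r * P\<^sup>2) * (1 - a * b * (P ^ n)\<^sup>2 * P ^ 3) * (1 - a * b * (P ^ n)\<^sup>2 * P ^ 4)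
          * (1 - a * b * (P ^ n)\<^sup>2 * P ^ 5) * (1 - a * b * (P ^ n)\<^sup>2 * P ^ 6)))"
    unfolding gcoeff_def args \<beta>_def[symmetric] \<alpha>_def[symmetric] y_def[symmetric] s_power_square_Suc_Suc
    unfolding qy unfolding qpoch_Suc ends
    by (simp add: divide_inverse inverse_mult_distrib mult_ac power2_eq_square)
  then show ?thesis
    unfolding starts .
qed

lemma gcoeff_recurrence:
  assumes "r \<le> n"
  shows "gcoeff (Suc (Suc n)) (Suc (Suc r))
    = gcoeff (Suc n) (Suc (Suc r)) + rec_c (Suc n) * gcoeff (Suc n) (Suc r) + rec_d (Suc n) * gcoeff n r"
proof -
  have c: "rec_c (Suc n) = (1 - b / a) * (1 + a * b * (P ^ n)\<^sup>2 * P ^ 5)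
      / ((1 - a * b * (P ^ n)\<^sup>2 * P ^ 4) * (1 - a * b * (P ^ n)\<^sup>2 * P ^ 6)) * a * s ^ 3 * (P ^ n * P)"
    by (simp add: rec_c_def power_add power_mult[symmetric] mult_ac eval_nat_numeral)
  have d: "rec_d (Suc n) = (1 - a\<^sup>2 * (P ^ n)\<^sup>2 * P ^ 4) * (1 - b\<^sup>2 * (P ^ n)\<^sup>2 * P ^ 4) * a * b * (P ^ n)\<^sup>2 * P ^ 4
      / ((1 - a * b * (P ^ n)\<^sup>2 * P ^ 3) * (1 - a * b * (P ^ n)\<^sup>2 * P ^ 4)\<^sup>2 * (1 - a * b * (P ^ n)\<^sup>2 * P ^ 5))"
    by (simp add: rec_d_def power_add power_mult[symmetric] mult_ac eval_nat_numeral)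
  have Y: "1 - P ^ r * P \<noteq> 0" "1 - P ^ r * P\<^sup>2 \<noteq> 0"
    using P_power_mult_ne_1[of 1 r] P_power_mult_ne_1[of 2 r] by simp_all
  have X: "1 - a * b * (P ^ n)\<^sup>2 * P ^ 3 \<noteq> 0" "1 - a * b * (P ^ n)\<^sup>2 * P ^ 4 \<noteq> 0"
      "1 - a * b * (P ^ n)\<^sup>2 * P ^ 5 \<noteq> 0" "1 - a * b * (P ^ n)\<^sup>2 * P ^ 6 \<noteq> 0"
    using abP_power_square_ne_1 by simp_all
  note identity = gcoeff_step_identity[where X = "P ^ n" and Y = "P ^ r", OF P_eq a_nonzero Y X]
  show ?thesis
    unfolding gcoeff_Suc_Suc_Suc_Suc[OF assms] gcoeff_Suc_Suc_Suc[OF assms]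
      gcoeff_Suc_Suc[OF assms] c d identity
    by (simp add: distrib_left mult_ac)
qed

lemma gcoeff_Suc_1: "gcoeff (Suc n) 1 = gcoeff n 1 + rec_c n"
proof -
  define X where "X = P ^ n"
  define D where "D = 1 - P"
  define k2 where "k2 = 1 - a * b * X\<^sup>2 * P\<^sup>2"
  define k4 where "k4 = 1 - a * b * X\<^sup>2 * P ^ 4"
  have nonzero: "D \<noteq> 0" "k2 \<noteq> 0" "k4 \<noteq> 0"
    using P_power_ne_1[of 1] abP_power_square_ne_1[of 2 n] abP_power_square_ne_1[of 4 n]
    by (simp_all add: D_def k2_def k4_def X_def)
  have "gcoeff (Suc n) 1 = - (s * (1 - b * X * P\<^sup>2) * (1 + a * X * P\<^sup>2) / (D * k4))"
    unfolding gcoeff_1 D_def k4_def X_def by (simp add: power2_eq_square mult_ac eval_nat_numeral)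
  moreover have "gcoeff n 1 = - (s * (1 - b * X * P) * (1 + a * X * P) / (D * k2))"
    unfolding gcoeff_1 D_def k2_def X_def by (simp add: mult_ac)
  moreover have "rec_c n = (1 - b / a) * (1 + a * b * X\<^sup>2 * P ^ 3) / (k2 * k4) * a * (s * P) * X"
    unfolding rec_c_def k2_def k4_def X_def
    by (simp add: P_eq power_add power_mult[symmetric] mult_ac eval_nat_numeral)
  ultimately show ?thesis
    using nonzero a_nonzero by (simp add: field_simps) (simp add: D_def k2_def k4_def, algebra)
qed

definition hcoeff :: "nat \<Rightarrow> complex" where
  "hcoeff k = s ^ k * qpoch (b * P) P k * qpoch (- (a * P)) P k / (qpoch P P k * qpoch (a * b * P\<^sup>2) P k)"

definition bcoeff :: "nat \<Rightarrow> nat \<Rightarrow> complex" where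
  "bcoeff n j = (\<Sum>m\<le>j. gcoeff n m * hcoeff (j - m))"

lemma hcoeff_0 [simp]: "hcoeff 0 = 1"
  by (simp add: hcoeff_def)

lemma hcoeff_Suc:
  "hcoeff (Suc k) = hcoeff k
    * (s * (1 - b * P * P ^ k) * (1 + a * P * P ^ k) / ((1 - P * P ^ k) * (1 - a * b * P\<^sup>2 * P ^ k)))"
  unfolding hcoeff_def qpoch_Suc by (simp add: divide_inverse inverse_mult_distrib mult_ac)

lemma bcoeff_0 [simp]: "bcoeff n 0 = 1"
  by (simp add: bcoeff_def)

lemma bcoeff_Suc_1: "bcoeff (Suc n) 1 = bcoeff n 1 + rec_c n * bcoeff n 0"
  by (simp add: bcoeff_def gcoeff_Suc_1[unfolded One_nat_def])

lemma bcoeff_recurrence: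
  assumes "j \<le> n"
  shows "bcoeff (Suc (Suc n)) (Suc (Suc j))
    = bcoeff (Suc n) (Suc (Suc j)) + rec_c (Suc n) * bcoeff (Suc n) (Suc j) + rec_d (Suc n) * bcoeff n j"
proof -
  have "(\<Sum>r\<le>j. gcoeff (Suc (Suc n)) (Suc (Suc r)) * hcoeff (j - r))
      = (\<Sum>r\<le>j. gcoeff (Suc n) (Suc (Suc r)) * hcoeff (j - r))
        + rec_c (Suc n) * (\<Sum>r\<le>j. gcoeff (Suc n) (Suc r) * hcoeff (j - r))
        + rec_d (Suc n) * (\<Sum>r\<le>j. gcoeff n r * hcoeff (j - r))"
    using assms by (simp add: gcoeff_recurrence sum.distrib sum_distrib_left algebra_simps)
  then show ?thesis
    unfolding bcoeff_def sum_atMost_Suc_Suc_shift[where n = j] unfolding sum.atMost_Suc_shift[where n = j]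
    by (simp add: gcoeff_Suc_1[unfolded One_nat_def] algebra_simps)
qed

lemma gcoeff_ratio_eq:
  assumes "n = m + k"
  shows "- (s ^ (2 * m + 1)) * (1 - b * P ^ (n + 2) / P ^ Suc m) * (1 + a * P ^ (n + 2) / P ^ Suc m)
      / ((1 - P ^ Suc m) * (1 - a * b * P ^ (2 * n + 3) / P ^ Suc m))
    = - (P ^ m * s * (1 - b * P * P ^ k) * (1 + a * P * P ^ k)
        / ((1 - P * P ^ m) * (1 - a * b * P ^ m * (P ^ k)\<^sup>2 * P\<^sup>2)))"
proof -
  have P2n: "P ^ (2 * n) = (P ^ m)\<^sup>2 * (P ^ k)\<^sup>2"
    by (simp add: assms mult.commute[of 2] power_mult power_add power_mult_distrib)
  have quotients: "b * P ^ (n + 2) / P ^ Suc m = b * P * P ^ k" "a * P ^ (n + 2) / P ^ Suc m = a * P * P ^ k"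
    "a * b * P ^ (2 * n + 3) / P ^ Suc m = a * b * P ^ m * (P ^ k)\<^sup>2 * P\<^sup>2"
    using P_nonzero by (simp_all add: assms P2n power_add field_simps power2_eq_square eval_nat_numeral)
  have powers: "P ^ Suc m = P * P ^ m" "s ^ (2 * m + 1) = P ^ m * s"
    by (simp_all add: P_eq power_mult)
  show ?thesis
    unfolding quotients unfolding powers by simp
qed

lemma qcv_ratio_eq:
  assumes "n = m + k"
  shows "(1 - inverse P ^ Suc n * P ^ m) * (1 - inverse (a * b * P ^ (n + 2)) * P ^ m) * P
      / ((1 - P * P ^ m) * (1 - inverse (a * b * P ^ (2 * Suc n)) * P ^ m))
    = - (P ^ m * (1 - P * P ^ k) * (1 - a * b * P\<^sup>2 * P ^ k)
        / ((1 - P * P ^ m) * (1 - a * b * P ^ m * (P ^ k)\<^sup>2 * P\<^sup>2)))"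
proof -
  define M W where "M = P ^ m" and "W = P ^ k"
  define D1 D2 D3 D4 where "D1 = 1 - P * M" and "D2 = 1 - a * b * M * W\<^sup>2 * P\<^sup>2"
    and "D3 = 1 - P * W" and "D4 = 1 - a * b * P\<^sup>2 * W"
  have M: "M \<noteq> 0" and W: "W \<noteq> 0" and Pn: "P ^ n = M * W" and P2n: "P ^ (n * 2) = M\<^sup>2 * W\<^sup>2"
    using P_nonzero by (simp_all add: M_def W_def assms power_add power_mult power_mult_distrib flip: power_mult)
  have D: "D1 \<noteq> 0" "D2 \<noteq> 0"
    using P_power_ne_1[of "Suc m"] abP_power_ne_1[of "m + k + k + 2"]
    by (auto simp: D1_def D2_def M_def W_def power_add power2_eq_square mult_ac)
  have pieces: "1 - inverse P ^ Suc n * P ^ m = - D3 / (P * W)"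
    "1 - inverse (a * b * P ^ (n + 2)) * P ^ m = - D4 / (a * b * P\<^sup>2 * W)"
    "1 - inverse (a * b * P ^ (2 * Suc n)) * P ^ m = - D2 / (a * b * M * W\<^sup>2 * P\<^sup>2)"
    using M W P_nonzero a_nonzero b_nonzero
    by (simp_all add: D2_def D3_def D4_def M_def[symmetric] Pn P2n power_inverse power_add field_simps
        power2_eq_square)
  show ?thesis
    unfolding pieces unfolding M_def[symmetric] W_def[symmetric]
    unfolding D1_def[symmetric] D2_def[symmetric] D3_def[symmetric] D4_def[symmetric]
    using M W D P_nonzero a_nonzero b_nonzero by (simp add: field_simps power2_eq_square)
qed

text \<open>
  The ratio G_n(m + 1) / G_n(m) is the ratio H(k + 1) / H(k) times the ratio of consecutive
  q-Chu--Vandermonde terms, where k = n - m.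
\<close>
lemma gcoeff_ratio_factorization:
  assumes "n = m + k"
  shows "- (s ^ (2 * m + 1)) * (1 - b * P ^ (n + 2) / P ^ Suc m) * (1 + a * P ^ (n + 2) / P ^ Suc m)
      / ((1 - P ^ Suc m) * (1 - a * b * P ^ (2 * n + 3) / P ^ Suc m))
    = s * (1 - b * P * P ^ k) * (1 + a * P * P ^ k) / ((1 - P * P ^ k) * (1 - a * b * P\<^sup>2 * P ^ k))
      * ((1 - inverse P ^ Suc n * P ^ m) * (1 - inverse (a * b * P ^ (n + 2)) * P ^ m) * P
         / ((1 - P * P ^ m) * (1 - inverse (a * b * P ^ (2 * Suc n)) * P ^ m)))"
proof -
  define D1 D2 D3 D4 where "D1 = 1 - P * P ^ m" and "D2 = 1 - a * b * P ^ m * (P ^ k)\<^sup>2 * P\<^sup>2"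
    and "D3 = 1 - P * P ^ k" and "D4 = 1 - a * b * P\<^sup>2 * P ^ k"
  have "D1 \<noteq> 0" "D2 \<noteq> 0" "D3 \<noteq> 0" "D4 \<noteq> 0"
    using P_power_ne_1[of "Suc m"] abP_power_ne_1[of "m + k + k + 2"] P_power_ne_1[of "Suc k"]
      abP_power_ne_1[of "k + 2"]
    by (auto simp: D1_def D2_def D3_def D4_def power_add power2_eq_square mult_ac)
  then show ?thesis
    unfolding gcoeff_ratio_eq[OF assms] qcv_ratio_eq[OF assms]
    unfolding D1_def[symmetric] D2_def[symmetric] D3_def[symmetric] D4_def[symmetric]
    by (simp add: field_simps)
qed

lemma gcoeff_hcoeff_eq_qcv_term:
  assumes "m \<le> Suc n"
  shows "gcoeff n m * hcoeff (Suc n - m)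
    = hcoeff (Suc n) * qcv_term P (inverse (a * b * P ^ (n + 2))) (inverse (a * b * P ^ (2 * Suc n))) (Suc n) m"
  using assms
proof (induction m)
  case (Suc m)
  define k where "k = n - m"
  have n: "n = m + k" and k: "Suc n - m = Suc k" "Suc n - Suc m = k"
    using Suc.prems by (auto simp: k_def)
  have "gcoeff n (Suc m) * hcoeff (Suc n - Suc m) = gcoeff n m * hcoeff (Suc n - m)
      * ((1 - inverse P ^ Suc n * P ^ m) * (1 - inverse (a * b * P ^ (n + 2)) * P ^ m) * P
         / ((1 - P * P ^ m) * (1 - inverse (a * b * P ^ (2 * Suc n)) * P ^ m)))"
    unfolding gcoeff_Suc gcoeff_ratio_factorization[OF n] k hcoeff_Suc by (simp add: mult_ac)
  also have "\<dots> = hcoeff (Suc n)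
      * qcv_term P (inverse (a * b * P ^ (n + 2))) (inverse (a * b * P ^ (2 * Suc n))) (Suc n) (Suc m)"
    using Suc by (simp only: qcv_term_Suc mult.assoc)
  finally show ?case .
qed simp

text \<open>The factor i = n of the q-Chu--Vandermonde product vanishes.\<close>
lemma bcoeff_Suc_self: "bcoeff n (Suc n) = 0"
proof -
  define c where "c = inverse (a * b * P ^ (2 * Suc n))"
  have "bcoeff n (Suc n)
      = hcoeff (Suc n) * (\<Sum>m\<le>Suc n. qcv_term P (inverse (a * b * P ^ (n + 2))) c (Suc n) m)"
    unfolding bcoeff_def c_def sum_distrib_left
    by (rule sum.cong) (simp_all add: gcoeff_hcoeff_eq_qcv_term)
  also have "(\<Sum>m\<le>Suc n. qcv_term P (inverse (a * b * P ^ (n + 2))) c (Suc n) m)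
      = (\<Prod>i<Suc n. inverse (a * b * P ^ (n + 2)) - c * P ^ i) / qpoch c P (Suc n)"
  proof (rule q_chu_vandermonde[OF P_nonzero])
    show "P ^ k \<noteq> 1" if "1 \<le> k" for k
      using P_power_ne_1 that .
    show "c * P ^ i \<noteq> 1" if "i < Suc n" for i
    proof
      assume "c * P ^ i = 1"
      moreover have "P ^ (2 * Suc n) = P ^ i * P ^ (2 * Suc n - i)"
        using that by (simp flip: power_add)
      ultimately have "a * b * P ^ (2 * Suc n - i) = 1"
        using P_nonzero by (simp add: c_def field_simps)
      moreover have "2 \<le> 2 * Suc n - i"
        using that by simp
      ultimately show False
        using abP_power_ne_1 by blast
    qed
  qed
  also have "inverse (a * b * P ^ (n + 2)) - c * P ^ n = 0"
    using P_nonzero by (simp add: c_def field_simps power_add eval_nat_numeral)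
  then have "(\<Prod>i<Suc n. inverse (a * b * P ^ (n + 2)) - c * P ^ i) = 0"
    by (auto intro: prod_zero)
  finally show ?thesis by simp
qed

definition bsum :: "nat \<Rightarrow> complex \<Rightarrow> complex" where
  "bsum n \<mu> = (\<Sum>j\<le>n. bcoeff n j * \<mu> ^ (n - j))"

lemma bsum_0: "bsum 0 \<mu> = 1"
  by (simp add: bsum_def)

lemma bsum_1: "bsum 1 \<mu> = (\<mu> + rec_c 0) * bsum 0 \<mu>"
  using bcoeff_Suc_1[of 0] bcoeff_Suc_self[of 0] by (simp add: bsum_def)

lemma bsum_recurrence:
  "bsum (Suc (Suc n)) \<mu> = (\<mu> + rec_c (Suc n)) * bsum (Suc n) \<mu> + rec_d (Suc n) * bsum n \<mu>"
proof -
  have "\<mu> * bsum (Suc n) \<mu> = (\<Sum>j\<le>Suc (Suc n). bcoeff (Suc n) j * \<mu> ^ (Suc (Suc n) - j))"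
    using bcoeff_Suc_self[of "Suc n"]
    by (simp add: bsum_def sum_distrib_left distrib_left Suc_diff_le mult_ac)
  also have "\<dots> = \<mu> ^ Suc (Suc n) + bcoeff (Suc n) 1 * \<mu> ^ Suc n
      + (\<Sum>k\<le>n. bcoeff (Suc n) (Suc (Suc k)) * \<mu> ^ (n - k))"
    unfolding sum_atMost_Suc_Suc_shift by simp
  finally have shifted: "\<mu> * bsum (Suc n) \<mu> = \<dots>" .
  have "bsum (Suc n) \<mu> = \<mu> ^ Suc n + (\<Sum>k\<le>n. bcoeff (Suc n) (Suc k) * \<mu> ^ (n - k))"
    unfolding bsum_def sum.atMost_Suc_shift by simp
  moreover have "bsum (Suc (Suc n)) \<mu> = \<mu> ^ Suc (Suc n) + bcoeff (Suc (Suc n)) 1 * \<mu> ^ Suc n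
      + (\<Sum>k\<le>n. bcoeff (Suc (Suc n)) (Suc (Suc k)) * \<mu> ^ (n - k))"
    unfolding bsum_def sum_atMost_Suc_Suc_shift by simp
  ultimately show ?thesis
    unfolding distrib_right shifted bsum_def[of n]
    by (simp add: bcoeff_Suc_1[unfolded One_nat_def] bcoeff_recurrence sum.distrib sum_distrib_left
        algebra_simps)
qed

section \<open>Reversal of the terminating 4phi3\<close>

text \<open>
  The j-th summand of the theorem is phi_prefactor n j * mu^(n-j) times the 4phi3, whose k-th term
  is phi_term n j k; it vanishes for k > j because of the numerator parameter P^(-j).
\<close>
definition phi_prefactor :: "nat \<Rightarrow> nat \<Rightarrow> complex" where
  "phi_prefactor n j = qpoch (inverse (b * P ^ (n + 1))) P j * qpoch (- inverse (a * P ^ (n + 1))) P j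
     / (qpoch P P j * qpoch (inverse (a * b * P ^ (2 * n + 2))) P j) * (-1) ^ j * s ^ j"

definition phi_term :: "nat \<Rightarrow> nat \<Rightarrow> nat \<Rightarrow> complex" where
  "phi_term n j k = qpoch (inverse (P ^ j)) P k * qpoch (a * b * P ^ (2 * n + 3) / P ^ j) P k
       * qpoch (b * P) P k * qpoch (- (a * P)) P k
     / (qpoch P P k * qpoch (a * b * P\<^sup>2) P k * qpoch (b * P ^ (n + 2) / P ^ j) P k
       * qpoch (- (a * P ^ (n + 2) / P ^ j)) P k) * P ^ k"

lemma phi_term_Suc:
  "phi_term n j (Suc k) = phi_term n j k
    * ((1 - inverse (P ^ j) * P ^ k) * (1 - a * b * P ^ (2 * n + 3) / P ^ j * P ^ k)
       * (1 - b * P * P ^ k) * (1 + a * P * P ^ k) * P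
     / ((1 - P * P ^ k) * (1 - a * b * P\<^sup>2 * P ^ k) * (1 - b * P ^ (n + 2) / P ^ j * P ^ k)
       * (1 + a * P ^ (n + 2) / P ^ j * P ^ k)))"
  unfolding phi_term_def qpoch_Suc by (simp add: divide_inverse inverse_mult_distrib mult_ac)

lemma phi_term_beyond: "j < k \<Longrightarrow> phi_term n j k = 0"
  using P_nonzero by (auto simp: phi_term_def qpoch_eq_0_iff)

lemma gcoeff_ratio_mult_phi_ratio:
  assumes j: "j = Suc (m + k)" and "j \<le> n"
  shows "- (s ^ (2 * m + 1)) * (1 - b * P ^ (n + 2) / P ^ Suc m) * (1 + a * P ^ (n + 2) / P ^ Suc m)
      / ((1 - P ^ Suc m) * (1 - a * b * P ^ (2 * n + 3) / P ^ Suc m))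
    * ((1 - inverse (P ^ j) * P ^ k) * (1 - a * b * P ^ (2 * n + 3) / P ^ j * P ^ k)
       * (1 - b * P * P ^ k) * (1 + a * P * P ^ k) * P
     / ((1 - P * P ^ k) * (1 - a * b * P\<^sup>2 * P ^ k) * (1 - b * P ^ (n + 2) / P ^ j * P ^ k)
       * (1 + a * P ^ (n + 2) / P ^ j * P ^ k)))
    = s * (1 - b * P * P ^ k) * (1 + a * P * P ^ k) / ((1 - P * P ^ k) * (1 - a * b * P\<^sup>2 * P ^ k))"
proof -
  define Q where "Q = P ^ Suc m"
  define U V W where "U = a * b * P ^ (2 * n + 3) / Q" and "V = b * P ^ (n + 2) / Q"
    and "W = a * P ^ (n + 2) / Q"
  define E1 E2 E3 E4 where "E1 = 1 - Q" and "E2 = 1 - U" and "E3 = 1 - V" and "E4 = 1 + W"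
  define D3 D4 B1 B2 where "D3 = 1 - P * P ^ k" and "D4 = 1 - a * b * P\<^sup>2 * P ^ k"
    and "B1 = 1 - b * P * P ^ k" and "B2 = 1 + a * P * P ^ k"
  have Q: "Q \<noteq> 0" "E1 \<noteq> 0"
    using P_nonzero P_power_ne_1[of "Suc m"] by (simp_all add: Q_def E1_def)
  have shift: "x / P ^ j * P ^ k = x / Q" "inverse (P ^ j) * P ^ k = inverse Q" for x
    using P_nonzero by (simp_all add: j Q_def power_add field_simps)
  have "m < n"
    using assms by simp
  then have "U = a * b * P ^ (2 * n + 3 - Suc m)" and "V = b * P ^ (n + 2 - Suc m)"
      and "W = a * P ^ (n + 2 - Suc m)"
    unfolding U_def V_def W_def Q_def by (intro mult_power_divide_power; simp)+
  moreover have "2 \<le> 2 * n + 3 - Suc m" "1 \<le> n + 2 - Suc m"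
    using \<open>m < n\<close> by simp_all
  ultimately have nonzero: "E2 \<noteq> 0" "E3 \<noteq> 0" "E4 \<noteq> 0" "D3 \<noteq> 0" "D4 \<noteq> 0"
    using abP_power_ne_1 bP_power_ne_1 aP_power_ne_minus_1 P_power_ne_1[of "Suc k"] abP_power_ne_1[of "k + 2"]
    by (auto simp: E2_def E3_def E4_def D3_def D4_def add_eq_0_iff power_add power2_eq_square mult_ac)
  have "P ^ m = s ^ (2 * m)"
    by (simp add: P_eq power_mult)
  then have sQ: "s ^ (2 * m + 1) = Q * s / P"
    using P_nonzero by (simp add: Q_def)
  have inverse_Q: "1 - inverse Q = - E1 / Q"
    using Q by (simp add: E1_def field_simps)
  show ?thesis
    unfolding shift Q_def[symmetric] sQ inverse_Q U_def[symmetric] V_def[symmetric] W_def[symmetric]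
    unfolding E1_def[symmetric] E2_def[symmetric] E3_def[symmetric] E4_def[symmetric]
      D3_def[symmetric] D4_def[symmetric] B1_def[symmetric] B2_def[symmetric]
    using Q nonzero P_nonzero by (simp add: field_simps)
qed

lemma phi_prefactor_eq_gcoeff: "phi_prefactor n m = gcoeff n m"
proof -
  define S where "S = P ^ (\<Sum>i<m. i)"
  define yb ya yab where "yb = b * P ^ (n + 1)" and "ya = - (a * P ^ (n + 1))"
    and "yab = a * b * P ^ (2 * n + 2)"
  have nonzero: "yb \<noteq> 0" "ya \<noteq> 0" "yab \<noteq> 0" "S \<noteq> 0"
    using P_nonzero a_nonzero b_nonzero by (simp_all add: yb_def ya_def yab_def S_def)
  have args: "yb * P / P ^ m = b * P ^ (n + 2) / P ^ m" "ya * P / P ^ m = - (a * P ^ (n + 2) / P ^ m)"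
      "yab * P / P ^ m = a * b * P ^ (2 * n + 3) / P ^ m"
    by (simp_all add: yb_def ya_def yab_def mult_ac eval_nat_numeral)
  have "inverse yb * inverse ya = - inverse yab"
    by (simp add: yb_def ya_def yab_def power_add mult_2 mult_2_right mult_ac flip: inverse_mult_distrib)
  then have signs: "inverse yb ^ m * inverse ya ^ m = (-1) ^ m * inverse yab ^ m"
    by (simp flip: power_mult_distrib)
  have "phi_prefactor n m = ((-1) ^ m * inverse yb ^ m * S) * ((-1) ^ m * inverse ya ^ m * S)
      / ((-1) ^ m * inverse yab ^ m * S) * (-1) ^ m * s ^ m
      * (qpoch (b * P ^ (n + 2) / P ^ m) P m * qpoch (- (a * P ^ (n + 2) / P ^ m)) P m
         / (qpoch P P m * qpoch (a * b * P ^ (2 * n + 3) / P ^ m) P m))"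
    unfolding phi_prefactor_def yb_def[symmetric] yab_def[symmetric] inverse_minus_eq[symmetric]
      ya_def[symmetric]
    unfolding qpoch_inverse[OF nonzero(1) P_nonzero] qpoch_inverse[OF nonzero(2) P_nonzero]
      qpoch_inverse[OF nonzero(3) P_nonzero] args S_def[symmetric]
    by (simp add: divide_inverse inverse_mult_distrib mult_ac)
  also have "((-1) ^ m * inverse yb ^ m * S) * ((-1) ^ m * inverse ya ^ m * S)
      / ((-1) ^ m * inverse yab ^ m * S) * (-1) ^ m * s ^ m = (-1) ^ m * s ^ (m * m)"
  proof -
    define D where "D = (-1) ^ m * inverse yab ^ m * S"
    have "D \<noteq> 0" and minus_one: "(-1 :: complex) ^ m * (-1) ^ m = 1"
      using nonzero by (simp_all add: D_def flip: power_mult_distrib)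
    have "((-1) ^ m * inverse yb ^ m * S) * ((-1) ^ m * inverse ya ^ m * S)
        = ((-1) ^ m * (-1) ^ m) * (inverse yb ^ m * inverse ya ^ m) * S * S"
      by (simp only: mult_ac)
    also have "\<dots> = D * S"
      unfolding signs minus_one D_def by (simp only: mult_ac mult_1_left)
    finally have numerator: "((-1) ^ m * inverse yb ^ m * S) * ((-1) ^ m * inverse ya ^ m * S) = D * S" .
    show ?thesis
      unfolding numerator D_def[symmetric] s_power_square S_def[symmetric]
      using \<open>D \<noteq> 0\<close> by simp
  qed
  finally show ?thesis
    by (simp add: gcoeff_def mult_ac)
qed

lemma phi_prefactor_mult_phi_term:
  assumes "k \<le> j" "j \<le> n"
  shows "phi_prefactor n j * phi_term n j k = hcoeff k * gcoeff n (j - k)"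
  using assms(1)
proof (induction k)
  case 0
  then show ?case
    by (simp add: phi_term_def phi_prefactor_eq_gcoeff)
next
  case (Suc k)
  define m where "m = j - Suc k"
  have j: "j = Suc (m + k)" and jk: "j - k = Suc m" "j - Suc k = m"
    using Suc.prems by (simp_all add: m_def)
  have "phi_prefactor n j * phi_term n j (Suc k) = hcoeff k * gcoeff n m
    * (- (s ^ (2 * m + 1)) * (1 - b * P ^ (n + 2) / P ^ Suc m) * (1 + a * P ^ (n + 2) / P ^ Suc m)
        / ((1 - P ^ Suc m) * (1 - a * b * P ^ (2 * n + 3) / P ^ Suc m))
      * ((1 - inverse (P ^ j) * P ^ k) * (1 - a * b * P ^ (2 * n + 3) / P ^ j * P ^ k)
         * (1 - b * P * P ^ k) * (1 + a * P * P ^ k) * P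
       / ((1 - P * P ^ k) * (1 - a * b * P\<^sup>2 * P ^ k) * (1 - b * P ^ (n + 2) / P ^ j * P ^ k)
         * (1 + a * P ^ (n + 2) / P ^ j * P ^ k))))"
  proof -
    have IH: "phi_prefactor n j * phi_term n j k = hcoeff k * gcoeff n (Suc m)"
      using Suc jk by simp
    show ?thesis
      unfolding phi_term_Suc mult.assoc[symmetric] unfolding IH gcoeff_Suc by (simp only: mult.assoc)
  qed
  then show ?case
    unfolding gcoeff_ratio_mult_phi_ratio[OF j assms(2)] jk hcoeff_Suc by (simp add: mult_ac)
qed

lemma bcoeff_eq_phi43:
  assumes "j \<le> n"
  shows "bcoeff n j = phi_prefactor n j
    * phi43 (inverse (P ^ j)) (a * b * P ^ (2 * n + 3) / P ^ j) (b * P) (- (a * P))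
        (a * b * P\<^sup>2) (b * P ^ (n + 2) / P ^ j) (- (a * P ^ (n + 2) / P ^ j)) P P"
proof -
  have "phi43 (inverse (P ^ j)) (a * b * P ^ (2 * n + 3) / P ^ j) (b * P) (- (a * P))
        (a * b * P\<^sup>2) (b * P ^ (n + 2) / P ^ j) (- (a * P ^ (n + 2) / P ^ j)) P P
      = (\<Sum>k\<le>j. phi_term n j k)"
    unfolding phi43_def phi_term_def[symmetric] by (rule suminf_finite) (auto simp: phi_term_beyond)
  then have "phi_prefactor n j * phi43 (inverse (P ^ j)) (a * b * P ^ (2 * n + 3) / P ^ j) (b * P) (- (a * P))
        (a * b * P\<^sup>2) (b * P ^ (n + 2) / P ^ j) (- (a * P ^ (n + 2) / P ^ j)) P P
      = (\<Sum>k\<le>j. hcoeff k * gcoeff n (j - k))"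
    using assms by (simp add: sum_distrib_left phi_prefactor_mult_phi_term)
  also have "\<dots> = bcoeff n j"
    unfolding bcoeff_def
    by (rule sum.reindex_bij_witness[where i = "\<lambda>m. j - m" and j = "\<lambda>k. j - k"]) (auto simp: mult.commute)
  finally show ?thesis ..
qed

end

section \<open>Real powers of p\<close>

context
  fixes p :: real
  assumes p_pos: "0 < p"
begin

lemma pw_add: "pw p (x + y) = pw p x * pw p y"
  by (simp add: pw_def powr_add)

lemma pw_diff: "pw p (x - y) = pw p x / pw p y"
  by (simp add: pw_def powr_diff)

lemma pw_minus: "pw p (- x) = inverse (pw p x)"
  by (simp add: pw_def powr_minus)

lemma pw_of_nat_mult: "pw p (real n * x) = pw p x ^ n"
  using p_pos by (simp add: pw_def powr_powr[symmetric] powr_realpow mult.commute)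

lemma pw_numeral_mult: "pw p (numeral k * x) = pw p x ^ numeral k"
  using pw_of_nat_mult[of "numeral k" x] by simp

lemma pw_neg_numeral_mult: "pw p (- numeral k * x) = inverse (pw p x ^ numeral k)"
  using pw_minus[of "numeral k * x"] pw_numeral_mult[of k x] by simp

lemma pw_of_nat: "pw p (real n) = of_real p ^ n"
  using p_pos by (simp add: pw_def powr_realpow)

lemma pw_numeral: "pw p (numeral k) = of_real p ^ numeral k"
  using pw_of_nat[of "numeral k"] by simp

lemma pw_1: "pw p 1 = of_real p"
  using pw_of_nat[of 1] by simp

lemma pw_of_nat_half: "pw p (real n / 2) = pw p (1 / 2) ^ n"
  using pw_of_nat_mult[of n "1 / 2"] by simp

lemma pw_numeral_half: "pw p (numeral k / 2) = pw p (1 / 2) ^ numeral k"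
  using pw_of_nat_half[of "numeral k"] by simp

lemmas pw_simps = pw_add pw_diff pw_minus pw_of_nat_mult pw_numeral_mult pw_neg_numeral_mult
  pw_of_nat pw_numeral pw_1 pw_of_nat_half pw_numeral_half

lemma pw_nonzero: "pw p x \<noteq> 0"
  using p_pos by (simp add: pw_def)

end

lemma pw_ne_1: "0 < p \<Longrightarrow> p < 1 \<Longrightarrow> 0 < x \<Longrightarrow> pw p x \<noteq> 1"
  using powr_less_mono2[of x p 1] by (auto simp: pw_def)

lemma pw_ne_minus_1: "pw p x \<noteq> -1"
proof
  assume "pw p x = -1"
  then have "p powr x = -1"
    unfolding pw_def by (metis of_real_1 of_real_eq_iff of_real_minus)
  then show False
    using powr_ge_zero[of p x] by simp
qed

lemma bpoly_parameters_pw: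
  assumes p: "0 < p" "p < 1" and "-1 < \<alpha>" "-1 < \<beta>"
  shows "bpoly_parameters (pw p \<alpha>) (pw p \<beta>) (pw p (1 / 2)) (of_real p)"
proof
  show "complex_of_real p = pw p (1 / 2) ^ 2"
    using pw_of_nat_half[OF p(1), of 2] pw_1[OF p(1)] by simp
  show "pw p (1 / 2) \<noteq> 0" "pw p \<alpha> \<noteq> 0" "pw p \<beta> \<noteq> 0"
    using pw_nonzero[OF p(1)] by blast+
  fix e :: nat
  show "complex_of_real p ^ e \<noteq> 1" if "1 \<le> e"
    using pw_ne_1[OF p, of "real e"] that by (simp add: pw_of_nat[OF p(1)])
  show "pw p \<alpha> * pw p \<beta> * complex_of_real p ^ e \<noteq> 1" if "2 \<le> e"
    using pw_ne_1[OF p, of "\<alpha> + \<beta> + real e"] assms that by (simp add: pw_simps[OF p(1)])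
  show "pw p \<beta> * complex_of_real p ^ e \<noteq> 1" if "1 \<le> e"
    using pw_ne_1[OF p, of "\<beta> + real e"] assms that by (simp add: pw_simps[OF p(1)])
  show "pw p \<alpha> * complex_of_real p ^ e \<noteq> -1"
    using pw_ne_minus_1[of p "\<alpha> + real e"] by (simp add: pw_simps[OF p(1)])
qed

context
  fixes p \<alpha> \<beta> :: real
  assumes p: "0 < p" "p < 1" and \<alpha>: "-1 < \<alpha>" and \<beta>: "-1 < \<beta>"
begin

interpretation bpoly_parameters "pw p \<alpha>" "pw p \<beta>" "pw p (1 / 2)" "of_real p"
  using p \<alpha> \<beta> by (rule bpoly_parameters_pw)

lemma bc_eq_rec_c: "bc p \<alpha> \<beta> k = rec_c k"
  unfolding bc_def rec_c_def pw_simps[OF p(1)]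
  by (simp add: power_add power2_eq_square[of "complex_of_real p"] mult_ac flip: power_mult)

lemma bd_eq_rec_d: "bd p \<alpha> \<beta> k = rec_d k"
  unfolding bd_def rec_d_def pw_simps[OF p(1)]
  by (simp add: power_add power2_eq_square[of "complex_of_real p"] mult_ac flip: power_mult)

lemma bpoly_eq_bsum: "bpoly p \<alpha> \<beta> n \<mu> = bsum n \<mu>"
proof (induction n rule: induct_nat_012)
  case 0
  show ?case by (simp add: bsum_0)
next
  case 1
  show ?case using bsum_1 by (simp add: bsum_0 bc_eq_rec_c)
next
  case (ge2 n)
  then show ?case by (simp add: bsum_recurrence bc_eq_rec_c bd_eq_rec_d)
qed

lemma summand_eq_bcoeff:
  assumes "j \<le> n"
  shows "(qpoch (pw p (-\<beta> - real n - 1)) (of_real p) j * qpoch (- pw p (-\<alpha> - real n - 1)) (of_real p) j)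
       / (qpoch (of_real p) (of_real p) j * qpoch (pw p (- 2 * real n - \<alpha> - \<beta> - 2)) (of_real p) j)
       * (-1) ^ j * pw p (real j / 2) * \<mu> ^ (n - j)
       * phi43 (pw p (- real j)) (pw p (2 * real n + \<alpha> + \<beta> + 3 - real j)) (pw p (\<beta> + 1))
               (- pw p (\<alpha> + 1))
               (pw p (\<alpha> + \<beta> + 2)) (pw p (real n + \<beta> + 2 - real j)) (- pw p (\<alpha> + real n + 2 - real j))
               (of_real p) (of_real p)
    = bcoeff n j * \<mu> ^ (n - j)"
proof -
  note nonzero = pw_nonzero[OF p(1)] P_nonzero
  have args: "pw p (-\<beta> - real n - 1) = inverse (pw p \<beta> * of_real p ^ (n + 1))"
      "pw p (-\<alpha> - real n - 1) = inverse (pw p \<alpha> * of_real p ^ (n + 1))"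
      "pw p (- 2 * real n - \<alpha> - \<beta> - 2) = inverse (pw p \<alpha> * pw p \<beta> * of_real p ^ (2 * n + 2))"
      "pw p (real j / 2) = pw p (1 / 2) ^ j" "pw p (- real j) = inverse (of_real p ^ j)"
      "pw p (2 * real n + \<alpha> + \<beta> + 3 - real j) = pw p \<alpha> * pw p \<beta> * of_real p ^ (2 * n + 3) / of_real p ^ j"
      "pw p (\<beta> + 1) = pw p \<beta> * of_real p" "pw p (\<alpha> + 1) = pw p \<alpha> * of_real p"
      "pw p (\<alpha> + \<beta> + 2) = pw p \<alpha> * pw p \<beta> * (of_real p)\<^sup>2"
      "pw p (real n + \<beta> + 2 - real j) = pw p \<beta> * of_real p ^ (n + 2) / of_real p ^ j"
      "pw p (\<alpha> + real n + 2 - real j) = pw p \<alpha> * of_real p ^ (n + 2) / of_real p ^ j"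
    unfolding pw_simps[OF p(1)] using nonzero
    by (simp_all add: field_simps power_add power_mult power2_eq_square[of "complex_of_real p"])
  show ?thesis
    unfolding args bcoeff_eq_phi43[OF assms] phi_prefactor_def by (simp add: mult_ac)
qed

end

theorem theorem4p1:
  fixes q p \<alpha> \<beta> :: real and n :: nat and \<mu> :: complex
  assumes "0 < q" "q < 1" "p = q powr (1/2)" "\<alpha> > -1" "\<beta> > -1"
  shows "bpoly p \<alpha> \<beta> n \<mu> =
    (\<Sum>j=0..n.
       (qpoch (pw p (-\<beta> - real n - 1)) (of_real p) j * qpoch (- pw p (-\<alpha> - real n - 1)) (of_real p) j)
       / (qpoch (of_real p) (of_real p) j * qpoch (pw p (- 2 * real n - \<alpha> - \<beta> - 2)) (of_real p) j)
       * (-1) ^ j * pw p (real j / 2) * \<mu> ^ (n - j)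
       * phi43 (pw p (- real j)) (pw p (2 * real n + \<alpha> + \<beta> + 3 - real j)) (pw p (\<beta> + 1))
               (- pw p (\<alpha> + 1))
               (pw p (\<alpha> + \<beta> + 2)) (pw p (real n + \<beta> + 2 - real j)) (- pw p (\<alpha> + real n + 2 - real j))
               (of_real p) (of_real p))"
proof -
  have p: "0 < p" "p < 1"
    using assms powr_less_mono2[of "1 / 2" q 1] by auto
  interpret bpoly_parameters "pw p \<alpha>" "pw p \<beta>" "pw p (1 / 2)" "of_real p"
    by (rule bpoly_parameters_pw[OF p assms(4,5)])
  show ?thesis
    unfolding atLeast0AtMost bpoly_eq_bsum[OF p assms(4,5)] bsum_def
    by (intro sum.cong refl summand_eq_bcoeff[OF p assms(4,5), symmetric]) simp
qed

end
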